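(* Let $\mathbf x_1,\ldots,\mathbf x_n\in\mathbb{R}^d\setminus\{\mathbf 0\}$, with $x_{ij}$ the $j$-th coordinate of $\mathbf x_i$, and let $\pi(\beta)\propto\prod_{i=1}^n\frac{1}{1+\exp(\mathbf x_i^T\beta)}$ be the (assumed proper) logit posterior under a flat prior. For $j=1,\ldots,d$ let $$z_j(\beta)=\frac12\sum_{i=1}^n x_{ij}\frac{\exp(\mathbf x_i^T\beta)}{1+\exp(\mathbf x_i^T\beta)}.$$ Then for every $\delta>0$ and every $j$, $\mathbb{E}_\pi[|z_j|^{2+\delta}]<\infty$.
   Context: The $z_j$ are the control variates $-\frac12\partial_{\beta_j}\ln\pi$ of the zero-variance method with linear trial polynomial, for a logit model in which all responses are $0$. *)

theory Defs
  imports "HOL-Analysis.Analysis"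
begin

text \<open>Unnormalised logit posterior (all responses 0, flat prior) on R^d,
  covariates x 0, ..., x (n-1).\<close>
definition logit_unnorm :: "(nat \<Rightarrow> real ^ 'd) \<Rightarrow> nat \<Rightarrow> real ^ 'd \<Rightarrow> real" where
  "logit_unnorm x n \<beta> = (\<Prod>i<n. 1 / (1 + exp (x i \<bullet> \<beta>)))"

definition logit_norm :: "(nat \<Rightarrow> real ^ 'd) \<Rightarrow> nat \<Rightarrow> ennreal" where
  "logit_norm x n = (\<integral>\<^sup>+ \<beta>. ennreal (logit_unnorm x n \<beta>) \<partial>lborel)"

text \<open>Posterior measure pi (a probability measure when the posterior is proper).\<close>
definition logit_post :: "(nat \<Rightarrow> real ^ 'd) \<Rightarrow> nat \<Rightarrow> (real ^ 'd) measure" where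
  "logit_post x n = density lborel
     (\<lambda>\<beta>. ennreal (logit_unnorm x n \<beta>) / logit_norm x n)"

definition zcv :: "(nat \<Rightarrow> real ^ 'd) \<Rightarrow> nat \<Rightarrow> 'd \<Rightarrow> real ^ 'd \<Rightarrow> real" where
  "zcv x n j \<beta> = 1/2 * (\<Sum>i<n. (x i $ j) * (exp (x i \<bullet> \<beta>) / (1 + exp (x i \<bullet> \<beta>))))"

end

theory Submission
  imports Defs
begin

text \<open>Each summand of \<open>z\<^sub>j\<close> is \<open>x\<^sub>i\<^sub>j\<close> times a logistic probability in \<open>(0,1)\<close>, so \<open>z\<^sub>j\<close> is
  bounded by \<open>\<Sum>\<^sub>i |x\<^sub>i\<^sub>j| / 2\<close>. Dividing a density by its own integral gives total mass at most
  one, so every moment of the bounded function \<open>z\<^sub>j\<close> under \<open>\<pi>\<close> is finite.\<close>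

lemma emeasure_density_normalised_le_1:
  fixes f :: "'a \<Rightarrow> ennreal"
  assumes f: "f \<in> borel_measurable M"
  shows "emeasure (density M (\<lambda>x. f x / (\<integral>\<^sup>+ y. f y \<partial>M))) (space M) \<le> 1"
proof -
  define N where "N = (\<integral>\<^sup>+ y. f y \<partial>M)"
  have "emeasure (density M (\<lambda>x. f x / N)) (space M) = (\<integral>\<^sup>+ x. f x * inverse N \<partial>M)"
    using f by (simp add: emeasure_density divide_ennreal_def)
  also have "\<dots> = N * inverse N"
    using f by (simp add: nn_integral_multc N_def)
  also have "\<dots> \<le> 1"
    \<comment> \<open>also when \<open>N\<close> is \<open>0\<close> or \<open>\<infinity>\<close>, since then \<open>N * inverse N = 0\<close>\<close>
    by (cases "N = 0 \<or> N = top") (auto simp: less_top simp flip: divide_ennreal_def)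
  finally show ?thesis by (simp add: N_def)
qed

lemma borel_measurable_logit_unnorm: "logit_unnorm x n \<in> borel_measurable borel"
proof -
  have "continuous_on UNIV (logit_unnorm x n)"
    unfolding logit_unnorm_def
    by (intro continuous_intros) (simp add: add_nonneg_eq_0_iff)
  then show ?thesis
    using borel_measurable_continuous_onI by blast
qed

lemma emeasure_logit_post_le_1: "emeasure (logit_post x n) UNIV \<le> 1"
  using emeasure_density_normalised_le_1[of "\<lambda>\<beta>. ennreal (logit_unnorm x n \<beta>)" lborel]
    borel_measurable_logit_unnorm[of x n]
  by (simp add: logit_post_def logit_norm_def)

lemma abs_zcv_le: "\<bar>zcv x n j \<beta>\<bar> \<le> 1/2 * (\<Sum>i<n. \<bar>x i $ j\<bar>)"
proof -
  have logistic: "\<bar>exp t / (1 + exp t)\<bar> \<le> 1" for t :: real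
    by (simp add: add_pos_pos)
  have "\<bar>\<Sum>i<n. x i $ j * (exp (x i \<bullet> \<beta>) / (1 + exp (x i \<bullet> \<beta>)))\<bar>
      \<le> (\<Sum>i<n. \<bar>x i $ j\<bar> * \<bar>exp (x i \<bullet> \<beta>) / (1 + exp (x i \<bullet> \<beta>))\<bar>)"
    unfolding abs_mult[symmetric] by (rule sum_abs)
  also have "\<dots> \<le> (\<Sum>i<n. \<bar>x i $ j\<bar>)"
    by (intro sum_mono mult_right_le_one_le logistic) simp_all
  finally show ?thesis
    by (simp add: zcv_def abs_mult)
qed

theorem mainTheorem8:
  fixes x :: "nat \<Rightarrow> real ^ 'd" and n :: nat and \<delta> :: real and j :: 'd
  assumes nonzero: "\<forall>i<n. x i \<noteq> 0"
    and proper: "logit_norm x n < \<infinity>"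
    and delta: "\<delta> > 0"
  shows "(\<integral>\<^sup>+ \<beta>. ennreal (\<bar>zcv x n j \<beta>\<bar> powr (2 + \<delta>)) \<partial>logit_post x n) < \<infinity>"
proof -
  define B where "B = 1/2 * (\<Sum>i<n. \<bar>x i $ j\<bar>)"
  have "(\<integral>\<^sup>+ \<beta>. ennreal (\<bar>zcv x n j \<beta>\<bar> powr (2 + \<delta>)) \<partial>logit_post x n)
      \<le> (\<integral>\<^sup>+ \<beta>. ennreal (B powr (2 + \<delta>)) \<partial>logit_post x n)"
    using delta abs_zcv_le[of x n j]
    by (intro nn_integral_mono ennreal_leI powr_mono2) (auto simp: B_def)
  also have "\<dots> = ennreal (B powr (2 + \<delta>)) * emeasure (logit_post x n) UNIV"
    by (simp add: logit_post_def)
  also have "\<dots> \<le> ennreal (B powr (2 + \<delta>)) * 1"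
    using emeasure_logit_post_le_1 by (rule mult_left_mono) simp
  finally show ?thesis
    using le_less_trans by fastforce
qed

end
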